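(* For every $n\ge2$, $$LLT_n[X;q]\;=\;\sum_{k=1}^n(-1)^{k-1}(q;q)_{k-1}\begin{bmatrix}n-1\\k-1\end{bmatrix}_q e_k[X]\;LLT_{n-k}[X;q].$$
   Context: $(q;q)_k=(1-q)\cdots(1-q^k)$, and $\begin{bmatrix}n\\k\end{bmatrix}_q=\frac{(q;q)_n}{(q;q)_k(q;q)_{n-k}}$ is the $q$-binomial coefficient. For $m\ge1$, $LLT_m[X;q]$ is the LLT polynomial $LLT_D[X;q]$ of the zero-area Dyck path $D=(NE)^m$ in the $m\times m$ lattice square, and $LLT_0=1$. The LLT polynomial of a Dyck path $D$ in the $m\times m$ square is defined as follows. Let $a_i$ be the number of full cells in row $i$ between $D$ and the diagonal. A parking function on $D$ labels the cells right of the North steps bijectively by cars $1,\dots,m$, increasing up columns; $c_i$ is the car in row $i$. Pairs of rows $i<j$ give a dinv if either $a_i=a_j$ and $c_i<c_j$, or $a_i=a_j+1$ and $c_i>c_j$; $\mathrm{dinv}(PF)$ counts these. $\sigma(PF)$ reads the cars by diagonals from highest to lowest, each diagonal from right to left. $\mathrm{pides}(PF)$ is the composition encoding the descent set of $\sigma(PF)^{-1}$. Then $LLT_D[X;q]=\sum_{PF}q^{\mathrm{dinv}(PF)}F_{\mathrm{pides}(PF)}[X]$, with $F_\alpha$ Gessel's fundamental quasisymmetric functions. (Equivalently, $LLT_m[X;q]=(q;q)_m\,h_m[X/(1-q)]$ in plethystic notation.) *)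

theory Defs
  imports Main
begin

text \<open>Symmetric functions are represented by their specialisations to finitely many
variables x 0, ..., x (N-1) with values in a field; q is a scalar of the same field.\<close>

definition qpoch :: "'a::field \<Rightarrow> nat \<Rightarrow> 'a" where
  "qpoch q k = (\<Prod>i=1..k. 1 - q ^ i)"

definition qbinom :: "'a::field \<Rightarrow> nat \<Rightarrow> nat \<Rightarrow> 'a" where
  "qbinom q n k = qpoch q n / (qpoch q k * qpoch q (n - k))"

definition elem :: "nat \<Rightarrow> nat \<Rightarrow> (nat \<Rightarrow> 'a::field) \<Rightarrow> 'a" where
  "elem N k x = (\<Sum>A\<in>{A. A \<subseteq> {..<N} \<and> card A = k}. \<Prod>i\<in>A. x i)"

definition fundQ :: "nat \<Rightarrow> nat \<Rightarrow> nat set \<Rightarrow> (nat \<Rightarrow> 'a::field) \<Rightarrow> 'a" where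
  "fundQ N n S x = (\<Sum>is\<in>{is. length is = n \<and> (\<forall>i\<in>set is. i < N) \<and>
        (\<forall>j. Suc j < n \<longrightarrow> is ! j \<le> is ! Suc j \<and> (Suc j \<in> S \<longrightarrow> is ! j < is ! Suc j))}.
      prod_list (map x is))"

text \<open>A Dyck path in the m x m square is given by its area sequence a (row i is a ! (i-1),
rows indexed from 0 here). Rows i, i+1 lie in the same column iff a!(i+1) = a!i + 1.
A parking function is the list c of cars, c ! i being the car in row i.\<close>
definition dyck_area :: "nat list \<Rightarrow> bool" where
  "dyck_area a = ((a \<noteq> [] \<longrightarrow> a ! 0 = 0) \<and> (\<forall>i. Suc i < length a \<longrightarrow> a ! Suc i \<le> Suc (a ! i)))"

definition parking_functions :: "nat list \<Rightarrow> nat list set" where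
  "parking_functions a = {c. length c = length a \<and> distinct c \<and> set c = {1..length a} \<and>
      (\<forall>i. Suc i < length a \<longrightarrow> a ! Suc i = Suc (a ! i) \<longrightarrow> c ! i < c ! Suc i)}"

definition dinv :: "nat list \<Rightarrow> nat list \<Rightarrow> nat" where
  "dinv a c = card {(i, j). i < j \<and> j < length a \<and>
      ((a ! i = a ! j \<and> c ! i < c ! j) \<or> (a ! i = Suc (a ! j) \<and> c ! i > c ! j))}"

text \<open>Position (0-based) of row i in the reading word: rows on higher diagonals first,
within a diagonal from right to left, i.e. by decreasing row index.\<close>
definition read_pos :: "nat list \<Rightarrow> nat \<Rightarrow> nat" where
  "read_pos a i = card {j. j < length a \<and> (a ! j > a ! i \<or> (a ! j = a ! i \<and> j > i))}"

definition sigma_word :: "nat list \<Rightarrow> nat list \<Rightarrow> nat list" where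
  "sigma_word a c = map (\<lambda>p. c ! (THE i. i < length a \<and> read_pos a i = p)) [0..<length a]"

text \<open>Descent set of the inverse of a permutation word w of {1..m}: v is a descent of
w^{-1} iff v+1 occurs before v in w.\<close>
definition pos_in :: "nat list \<Rightarrow> nat \<Rightarrow> nat" where
  "pos_in w v = (THE p. p < length w \<and> w ! p = v)"

definition ides :: "nat list \<Rightarrow> nat set" where
  "ides w = {v. 1 \<le> v \<and> v < length w \<and> pos_in w (Suc v) < pos_in w v}"

definition pides :: "nat list \<Rightarrow> nat list \<Rightarrow> nat set" where
  "pides a c = ides (sigma_word a c)"

definition LLT_D :: "nat \<Rightarrow> nat list \<Rightarrow> 'a::field \<Rightarrow> (nat \<Rightarrow> 'a) \<Rightarrow> 'a" where
  "LLT_D N a q x = (\<Sum>c\<in>parking_functions a. q ^ dinv a c * fundQ N (length a) (pides a c) x)"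

text \<open>LLT_m: the zero-area Dyck path (NE)^m has area sequence replicate m 0; LLT_0 = 1.\<close>
definition LLT :: "nat \<Rightarrow> nat \<Rightarrow> 'a::field \<Rightarrow> (nat \<Rightarrow> 'a) \<Rightarrow> 'a" where
  "LLT N m q x = (if m = 0 then 1 else LLT_D N (replicate m 0) q x)"

end

theory Submission
  imports Defs "HOL-Computational_Algebra.Formal_Power_Series"
begin

text \<open>For the zero-area Dyck path all rows lie on one diagonal, so dinv counts the coinversions of
the car word and the reading word is its reverse. Expanding the fundamental quasisymmetric
functions and undoing standardization turns LLT_m into the coinversion generating function of all
words of length m. Splitting off the first letter of a word identifies this generating function
with (q;q)_m times the coefficient of t^m in T(x) = \<Prod>_i e_q(x_i t), where
e_q(z) = \<Sum>_j z^j/(q;q)_j. Since (1 - z) e_q(z) = e_q(q z), we get E(t) T(x) = T(q x) for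
E(t) = \<Prod>_i (1 - x_i t) = \<Sum>_k (-1)^k e_k t^k, and comparing coefficients of t^n gives the
recursion. As q^i \<noteq> 1 is only assumed for i \<le> n, e_q is truncated at degree n and all series
identities are taken modulo t^(n+1).\<close>

section \<open>The coinversion generating function of words\<close>

definition words :: "nat \<Rightarrow> nat \<Rightarrow> nat list set" where
  "words N m = {u. length u = m \<and> (\<forall>i\<in>set u. i < N)}"

definition coinv :: "nat list \<Rightarrow> nat" where
  "coinv u = card {(i, j). i < j \<and> j < length u \<and> u ! i < u ! j}"

definition coinv_sum :: "nat \<Rightarrow> nat \<Rightarrow> 'a::field \<Rightarrow> (nat \<Rightarrow> 'a) \<Rightarrow> 'a" where
  "coinv_sum N m q x = (\<Sum>u\<in>words N m. q ^ coinv u * prod_list (map x u))"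

definition scale_from :: "'a::times \<Rightarrow> nat \<Rightarrow> (nat \<Rightarrow> 'a) \<Rightarrow> nat \<Rightarrow> 'a" where
  "scale_from q k x b = (if b < k then x b else q * x b)"

lemma finite_words: "finite (words N m)"
proof -
  have "words N m = {u. set u \<subseteq> {..<N} \<and> length u = m}" by (auto simp: words_def)
  then show ?thesis by (simp add: finite_lists_length_eq)
qed

lemma words_Suc: "words N (Suc m) = (\<lambda>(a, u). a # u) ` ({..<N} \<times> words N m)"
proof (rule set_eqI)
  fix v show "v \<in> words N (Suc m) \<longleftrightarrow> v \<in> (\<lambda>(a, u). a # u) ` ({..<N} \<times> words N m)"
    by (cases v) (auto simp: words_def)
qed

lemma coinv_Cons: "coinv (a # u) = length (filter (\<lambda>b. a < b) u) + coinv u"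
proof -
  let ?S = "{(i, j). i < j \<and> j < length (a # u) \<and> (a # u) ! i < (a # u) ! j}"
  let ?A = "(\<lambda>j. (0::nat, Suc j)) ` {j. j < length u \<and> a < u ! j}"
  let ?B = "(\<lambda>(i, j). (Suc i, Suc j)) ` {(i, j). i < j \<and> j < length u \<and> u ! i < u ! j}"
  have "?S = ?A \<union> ?B"
  proof (rule set_eqI, clarify)
    fix i j show "(i, j) \<in> ?S \<longleftrightarrow> (i, j) \<in> ?A \<union> ?B"
      by (cases i; cases j) auto
  qed
  moreover have "?A \<inter> ?B = {}" by auto
  moreover have "finite ?B"
    by (rule finite_imageI, rule finite_subset[of _ "{..<length u} \<times> {..<length u}"]) auto
  moreover have "card ?A = length (filter (\<lambda>b. a < b) u)"
    by (subst card_image) (auto simp: inj_on_def length_filter_conv_card)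
  moreover have "card ?B = coinv u"
    unfolding coinv_def by (subst card_image) (auto simp: inj_on_def)
  ultimately show ?thesis unfolding coinv_def by (simp add: card_Un_disjoint)
qed

lemma prod_list_map_scale_from:
  fixes x :: "nat \<Rightarrow> 'a::comm_monoid_mult"
  shows "prod_list (map (scale_from q k x) u) =
    q ^ length (filter (\<lambda>b. k \<le> b) u) * prod_list (map x u)"
  by (induction u) (auto simp: scale_from_def mult_ac)

lemma coinv_sum_0: "coinv_sum N 0 q x = 1"
proof -
  have "words N 0 = {[]}" by (auto simp: words_def)
  then show ?thesis by (simp add: coinv_sum_def coinv_def)
qed

text \<open>Moving the first letter a out of a word scales the variables x_b with b > a by q, which
accounts for the coinversions it forms.\<close>

lemma coinv_sum_Suc:
  "coinv_sum N (Suc m) q x = (\<Sum>a<N. x a * coinv_sum N m q (scale_from q (Suc a) x))"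
proof -
  have inj: "inj_on (\<lambda>(a, u). a # u) ({..<N} \<times> words N m)" by (auto simp: inj_on_def)
  have "coinv_sum N (Suc m) q x =
      (\<Sum>(a, u)\<in>{..<N} \<times> words N m. q ^ coinv (a # u) * prod_list (map x (a # u)))"
    unfolding coinv_sum_def words_Suc by (subst sum.reindex[OF inj]) (simp add: case_prod_unfold)
  also have "\<dots> = (\<Sum>a<N. \<Sum>u\<in>words N m.
      x a * (q ^ coinv u * prod_list (map (scale_from q (Suc a) x) u)))"
  proof (subst sum.cartesian_product[symmetric], intro sum.cong refl)
    fix a u
    have "filter (\<lambda>b. Suc a \<le> b) u = filter (\<lambda>b. a < b) u" by (intro filter_cong) auto
    then show "q ^ coinv (a # u) * prod_list (map x (a # u)) =
        x a * (q ^ coinv u * prod_list (map (scale_from q (Suc a) x) u))"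
      by (simp add: coinv_Cons prod_list_map_scale_from power_add algebra_simps)
  qed
  finally show ?thesis by (simp add: coinv_sum_def sum_distrib_left)
qed

section \<open>Standardization\<close>

text \<open>Equal letters are ranked from right to left, so standardization neither creates nor
destroys coinversions.\<close>

definition std_less :: "nat list \<Rightarrow> nat \<Rightarrow> nat \<Rightarrow> bool" where
  "std_less u i j = (u ! i < u ! j \<or> (u ! i = u ! j \<and> j < i))"

definition std_rank :: "nat list \<Rightarrow> nat \<Rightarrow> nat" where
  "std_rank u j = card {i. i < length u \<and> std_less u i j}"

definition standardize :: "nat list \<Rightarrow> nat list" where
  "standardize u = map (\<lambda>j. Suc (std_rank u j)) [0..<length u]"

lemma std_less_irrefl: "\<not> std_less u i i"
  by (simp add: std_less_def)

lemma std_less_trans: "std_less u i j \<Longrightarrow> std_less u j k \<Longrightarrow> std_less u i k"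
  by (auto simp: std_less_def)

lemma std_less_total: "i \<noteq> j \<Longrightarrow> std_less u i j \<or> std_less u j i"
  by (auto simp: std_less_def)

lemma std_rank_strict_mono:
  assumes "i < length u" "std_less u i j"
  shows "std_rank u i < std_rank u j"
  unfolding std_rank_def
proof (rule psubset_card_mono)
  show "{k. k < length u \<and> std_less u k i} \<subset> {k. k < length u \<and> std_less u k j}"
    using assms std_less_trans std_less_irrefl by blast
qed simp

lemma std_rank_less_iff:
  assumes "i < length u" "j < length u"
  shows "std_rank u i < std_rank u j \<longleftrightarrow> std_less u i j"
  using std_rank_strict_mono[OF assms(1)] std_rank_strict_mono[OF assms(2), of i]
    std_less_total[of i j u]
  by (metis less_asym less_irrefl)

lemma std_rank_less_length: "j < length u \<Longrightarrow> std_rank u j < length u"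
proof -
  assume j: "j < length u"
  have "{i. i < length u \<and> std_less u i j} \<subseteq> {..<length u} - {j}"
    using std_less_irrefl by auto
  then have "std_rank u j \<le> card ({..<length u} - {j})"
    unfolding std_rank_def by (intro card_mono) auto
  then show ?thesis using j by simp
qed

lemma std_rank_inj:
  "i < length u \<Longrightarrow> j < length u \<Longrightarrow> std_rank u i = std_rank u j \<Longrightarrow> i = j"
  using std_rank_less_iff std_less_total by (metis less_irrefl)

lemma length_standardize [simp]: "length (standardize u) = length u"
  by (simp add: standardize_def)

lemma nth_standardize: "j < length u \<Longrightarrow> standardize u ! j = Suc (std_rank u j)"
  by (simp add: standardize_def)

lemma sorted_nth_eqI:
  fixes s :: "'a::linorder list"
  assumes "sorted s" "r < length s"
    and "card {i. i < length s \<and> s ! i < y} \<le> r" "r < card {i. i < length s \<and> s ! i \<le> y}"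
  shows "s ! r = y"
proof (rule ccontr)
  assume "s ! r \<noteq> y"
  then consider "s ! r < y" | "y < s ! r" by fastforce
  then show False
  proof cases
    case 1
    then have "{..r} \<subseteq> {i. i < length s \<and> s ! i < y}"
      using assms(1,2) by (auto simp: sorted_iff_nth_mono intro: le_less_trans)
    from card_mono[OF _ this] assms(3) show False by simp
  next
    case 2
    have "i < r" if "i < length s" "s ! i \<le> y" for i
      using 2 that sorted_nth_mono[OF assms(1), of r i] by (metis leI le_less_trans not_le)
    then have "{i. i < length s \<and> s ! i \<le> y} \<subseteq> {..<r}" by auto
    from card_mono[OF _ this] assms(4) show False by simp
  qed
qed

lemma card_nth_sort:
  "card {i. i < length (sort u) \<and> P (sort u ! i)} = card {i. i < length u \<and> P (u ! i)}"
  by (metis length_filter_conv_card filter_sort length_sort sort_key_def)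

lemma nth_sort_std_rank: "j < length u \<Longrightarrow> sort u ! std_rank u j = u ! j"
proof -
  assume j: "j < length u"
  have below: "{i. i < length u \<and> u ! i < u ! j} \<subseteq> {i. i < length u \<and> std_less u i j}"
    by (auto simp: std_less_def)
  have upto: "{i. i < length u \<and> std_less u i j} \<subset> {i. i < length u \<and> u ! i \<le> u ! j}"
    using j std_less_irrefl by (auto simp: std_less_def)
  show ?thesis
  proof (rule sorted_nth_eqI)
    show "std_rank u j < length (sort u)" using std_rank_less_length[OF j] by simp
    show "card {i. i < length (sort u) \<and> sort u ! i < u ! j} \<le> std_rank u j"
      using card_nth_sort[of u "\<lambda>v. v < u ! j"] card_mono[OF _ below]
      unfolding std_rank_def by simp
    show "std_rank u j < card {i. i < length (sort u) \<and> sort u ! i \<le> u ! j}"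
      using card_nth_sort[of u "\<lambda>v. v \<le> u ! j"] psubset_card_mono[OF _ upto]
      unfolding std_rank_def by simp
  qed simp
qed

lemma coinv_standardize: "coinv (standardize u) = coinv u"
  unfolding coinv_def
proof (intro arg_cong[where f = card] Collect_cong, clarify)
  fix i j
  show "(i < j \<and> j < length (standardize u) \<and> standardize u ! i < standardize u ! j) =
      (i < j \<and> j < length u \<and> u ! i < u ! j)"
    using std_rank_less_iff[of i u j] by (auto simp: nth_standardize std_less_def)
qed

section \<open>Decomposing words by standardization\<close>

definition perms :: "nat \<Rightarrow> nat list set" where
  "perms m = {c. length c = m \<and> distinct c \<and> set c = {1..m}}"

text \<open>iasc c = ides (rev c), and rev c is the reading word of c on the zero-area path.\<close>

definition iasc :: "nat list \<Rightarrow> nat set" where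
  "iasc c = {v. 1 \<le> v \<and> v < length c \<and> pos_in c v < pos_in c (Suc v)}"

definition fund_seqs :: "nat \<Rightarrow> nat \<Rightarrow> nat set \<Rightarrow> nat list set" where
  "fund_seqs N m S = {s. length s = m \<and> (\<forall>i\<in>set s. i < N) \<and>
      (\<forall>j. Suc j < m \<longrightarrow> s ! j \<le> s ! Suc j \<and> (Suc j \<in> S \<longrightarrow> s ! j < s ! Suc j))}"

definition unstandardize :: "nat list \<Rightarrow> nat list \<Rightarrow> nat list" where
  "unstandardize c s = map (\<lambda>v. s ! (v - 1)) c"

lemma finite_perms: "finite (perms m)"
proof -
  have "perms m \<subseteq> {c. set c \<subseteq> {1..m} \<and> length c = m}" by (auto simp: perms_def)
  then show ?thesis using finite_lists_length_eq[of "{1..m}" m] finite_subset by blast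
qed

lemma fund_seqs_subset_words: "fund_seqs N m S \<subseteq> words N m"
  by (auto simp: fund_seqs_def words_def)

lemma finite_fund_seqs: "finite (fund_seqs N m S)"
  using finite_subset[OF fund_seqs_subset_words finite_words] .

lemma fundQ_eq_sum_fund_seqs: "fundQ N m S x = (\<Sum>s\<in>fund_seqs N m S. prod_list (map x s))"
  unfolding fundQ_def fund_seqs_def by simp

lemma sorted_fund_seqs: "s \<in> fund_seqs N m S \<Longrightarrow> sorted s"
  by (simp add: fund_seqs_def sorted_iff_nth_Suc)

lemma perms_nth_bounds: "c \<in> perms m \<Longrightarrow> i < m \<Longrightarrow> 1 \<le> c ! i \<and> c ! i \<le> m"
  unfolding perms_def by (metis (mono_tags, lifting) atLeastAtMost_iff mem_Collect_eq nth_mem)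

lemma card_perms_less:
  assumes c: "c \<in> perms m" and k: "1 \<le> k" "k \<le> Suc m"
  shows "card {i. i < m \<and> c ! i < k} = k - 1"
proof -
  have len: "length c = m" and d: "distinct c" and s: "set c = {1..m}"
    using c by (auto simp: perms_def)
  have "(\<lambda>i. c ! i) ` {i. i < m \<and> c ! i < k} = {1..<k}"
  proof
    show "(\<lambda>i. c ! i) ` {i. i < m \<and> c ! i < k} \<subseteq> {1..<k}"
      using perms_nth_bounds[OF c] by auto
    show "{1..<k} \<subseteq> (\<lambda>i. c ! i) ` {i. i < m \<and> c ! i < k}"
    proof
      fix v assume v: "v \<in> {1..<k}"
      then have "v \<in> set c" using s k by auto
      then obtain i where "i < m" "c ! i = v" using len by (auto simp: in_set_conv_nth)
      then show "v \<in> (\<lambda>i. c ! i) ` {i. i < m \<and> c ! i < k}" using v by force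
    qed
  qed
  moreover have "inj_on (\<lambda>i. c ! i) {i. i < m \<and> c ! i < k}"
    using d len by (auto simp: inj_on_def nth_eq_iff_index_eq)
  ultimately show ?thesis by (metis card_atLeastLessThan card_image)
qed

lemma pos_in_nth: "distinct w \<Longrightarrow> p < length w \<Longrightarrow> pos_in w (w ! p) = p"
  unfolding pos_in_def by (rule the_equality) (auto simp: nth_eq_iff_index_eq)

lemma nth_pos_in: "distinct w \<Longrightarrow> v \<in> set w \<Longrightarrow> pos_in w v < length w \<and> w ! pos_in w v = v"
  by (metis in_set_conv_nth pos_in_nth)

lemma standardize_in_perms: "standardize u \<in> perms (length u)"
proof -
  have d: "distinct (standardize u)"
    unfolding standardize_def distinct_map using std_rank_inj by (auto simp: inj_on_def)
  have "set (standardize u) \<subseteq> {1..length u}"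
    unfolding standardize_def using std_rank_less_length by (auto simp: Suc_le_eq)
  moreover have "card (set (standardize u)) = length u" using distinct_card[OF d] by simp
  ultimately have "set (standardize u) = {1..length u}" by (intro card_subset_eq) auto
  then show ?thesis using d by (simp add: perms_def)
qed

lemma sort_in_fund_seqs:
  assumes u: "u \<in> words N m"
  shows "sort u \<in> fund_seqs N m (iasc (standardize u))"
proof -
  let ?c = "standardize u"
  have len: "length u = m" using u by (simp add: words_def)
  have dc: "distinct ?c" and sc: "set ?c = {1..m}"
    using standardize_in_perms[of u] len by (auto simp: perms_def)
  have "sort u ! j < sort u ! Suc j" if j: "Suc j < m" "Suc j \<in> iasc ?c" for j
  proof -
    define p p' where "p = pos_in ?c (Suc j)" and "p' = pos_in ?c (Suc (Suc j))"
    have "p < p'" using j(2) by (simp add: iasc_def p_def p'_def)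
    have "Suc j \<in> set ?c" "Suc (Suc j) \<in> set ?c" using sc j by auto
    then have p: "p < m" "?c ! p = Suc j" and p': "p' < m" "?c ! p' = Suc (Suc j)"
      using nth_pos_in[OF dc] len unfolding p_def p'_def by auto
    have ranks: "std_rank u p = j" "std_rank u p' = Suc j"
      using p p' nth_standardize[of _ u] len by auto
    then have "std_less u p p'" using std_rank_less_iff[of p u p'] p p' len by simp
    with \<open>p < p'\<close> have "u ! p < u ! p'" by (auto simp: std_less_def)
    then show ?thesis using nth_sort_std_rank[of p u] nth_sort_std_rank[of p' u] ranks p p' len
      by simp
  qed
  moreover have "sort u ! j \<le> sort u ! Suc j" if "Suc j < m" for j
    using that sorted_sort[of u] len by (simp add: sorted_iff_nth_Suc)
  ultimately show ?thesis using u by (auto simp: fund_seqs_def words_def)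
qed

lemma unstandardize_in_words:
  assumes c: "c \<in> perms m" and s: "s \<in> fund_seqs N m S"
  shows "unstandardize c s \<in> words N m"
proof -
  have len: "length c = m" "length s = m" using c s by (auto simp: perms_def fund_seqs_def)
  have "s ! (v - 1) < N" if v: "v \<in> set c" for v
  proof -
    have "1 \<le> v" "v \<le> m" using c v by (auto simp: perms_def)
    then have "s ! (v - 1) \<in> set s" using len by (intro nth_mem) simp
    then show ?thesis using s by (simp add: fund_seqs_def)
  qed
  then show ?thesis using len by (simp add: words_def unstandardize_def)
qed

lemma sort_unstandardize:
  assumes c: "c \<in> perms m" and s: "s \<in> fund_seqs N m S"
  shows "sort (unstandardize c s) = s"
proof (rule properties_for_sort)
  show "sorted s" using sorted_fund_seqs[OF s] .
  have set_c: "set c = {1..m}" and d: "distinct c" using c unfolding perms_def by blast+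
  have "set [1..<Suc m] = {1..m}" by (simp only: set_upt atLeastLessThanSuc_atLeastAtMost)
  then have mc: "mset c = mset [1..<Suc m]"
    using set_eq_iff_mset_eq_distinct[OF d distinct_upt] set_c by metis
  have "length s = m" using s by (simp add: fund_seqs_def)
  then have ms: "map (\<lambda>v. s ! (v - 1)) [1..<Suc m] = s"
    by (intro nth_equalityI) (simp_all del: upt_Suc)
  have "mset (unstandardize c s) = image_mset (\<lambda>v. s ! (v - 1)) (mset [1..<Suc m])"
    by (simp only: unstandardize_def mset_map mc)
  also have "\<dots> = mset s" by (simp only: mset_map[symmetric] ms)
  finally show "mset s = mset (unstandardize c s)" by simp
qed

lemma unstandardize_standardize: "unstandardize (standardize u) (sort u) = u"
  by (rule nth_equalityI) (auto simp: unstandardize_def nth_standardize nth_sort_std_rank)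

lemma standardize_eqI:
  assumes c: "c \<in> perms (length u)"
    and order: "\<And>i j. i < length u \<Longrightarrow> j < length u \<Longrightarrow> std_less u i j \<Longrightarrow> c ! i < c ! j"
  shows "standardize u = c"
proof (rule nth_equalityI)
  show "length (standardize u) = length c" using c by (simp add: perms_def)
  fix j assume "j < length (standardize u)"
  then have j: "j < length u" by simp
  have "std_less u i j \<longleftrightarrow> c ! i < c ! j" if "i < length u" for i
    using order[OF that j] order[OF j that] std_less_total[of i j u] std_less_irrefl[of u i]
    by (cases "i = j") auto
  then have "std_rank u j = card {i. i < length u \<and> c ! i < c ! j}"
    unfolding std_rank_def by (intro arg_cong[where f = card]) auto
  also have "\<dots> = c ! j - 1"
    using card_perms_less[OF c, of "c ! j"] perms_nth_bounds[OF c j] by simp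
  finally show "standardize u ! j = c ! j"
    using nth_standardize[OF j] perms_nth_bounds[OF c j] by simp
qed

text \<open>Within a block of equal entries of s no value is an inverse ascent of c.\<close>

lemma pos_in_decreasing_on_constant_block:
  assumes c: "c \<in> perms m" and s: "s \<in> fund_seqs N m (iasc c)"
    and ab: "1 \<le> a" "a < b" "b \<le> m" and const: "s ! (a - 1) = s ! (b - 1)"
  shows "pos_in c b < pos_in c a"
proof -
  have len: "length c = m" "length s = m" and d: "distinct c" and set_c: "set c = {1..m}"
    using c s by (auto simp: perms_def fund_seqs_def)
  have pos_drop: "pos_in c (Suc v) < pos_in c v" if v: "a \<le> v" "v < b" for v
  proof -
    have "s ! (a - 1) \<le> s ! (v - 1)" "s ! (v - 1) \<le> s ! v" "s ! v \<le> s ! (b - 1)"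
      using sorted_fund_seqs[OF s] len ab v by (auto simp: sorted_iff_nth_mono)
    then have "\<not> s ! (v - 1) < s ! Suc (v - 1)" using const ab v by simp
    moreover have "\<forall>j. Suc j < m \<longrightarrow> Suc j \<in> iasc c \<longrightarrow> s ! j < s ! Suc j"
      using s by (simp add: fund_seqs_def)
    moreover have "Suc (v - 1) = v" "v < m" using ab v by simp_all
    ultimately have "v \<notin> iasc c" by metis
    then have "\<not> pos_in c v < pos_in c (Suc v)" using ab v len by (simp add: iasc_def)
    moreover have "v \<in> set c" "Suc v \<in> set c" using set_c ab v by auto
    then have "pos_in c v \<noteq> pos_in c (Suc v)" using nth_pos_in[OF d] by (metis n_not_Suc_n)
    ultimately show ?thesis by simp
  qed
  have "pos_in c v < pos_in c a" if "Suc a \<le> v" "v \<le> b" for v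
    using that
  proof (induction v rule: dec_induct)
    case base then show ?case using pos_drop ab by simp
  next
    case (step v) then show ?case using pos_drop[of v] by simp
  qed
  then show ?thesis using ab by simp
qed

lemma std_less_unstandardize_imp_less:
  assumes c: "c \<in> perms m" and s: "s \<in> fund_seqs N m (iasc c)"
    and ij: "i < m" "j < m" and less: "std_less (unstandardize c s) i j"
  shows "c ! i < c ! j"
proof -
  let ?u = "unstandardize c s"
  have len: "length c = m" "length s = m" and d: "distinct c"
    using c s by (auto simp: perms_def fund_seqs_def)
  have u: "?u ! k = s ! (c ! k - 1)" if "k < m" for k using that len by (simp add: unstandardize_def)
  have bounds: "1 \<le> c ! i" "c ! i \<le> m" "1 \<le> c ! j" "c ! j \<le> m"
    using perms_nth_bounds[OF c] ij by auto
  consider "?u ! i < ?u ! j" | "?u ! i = ?u ! j" "j < i" using less by (auto simp: std_less_def)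
  then show ?thesis
  proof cases
    case 1
    then have "s ! (c ! i - 1) < s ! (c ! j - 1)" using u ij by simp
    moreover have "c ! i - 1 < length s" using bounds len by simp
    ultimately have "\<not> c ! j - 1 \<le> c ! i - 1"
      using sorted_nth_mono[OF sorted_fund_seqs[OF s]] by (meson leD)
    then show ?thesis by simp
  next
    case 2
    show ?thesis
    proof (rule ccontr)
      assume "\<not> c ! i < c ! j"
      moreover have "c ! i \<noteq> c ! j" using d ij 2 len by (simp add: nth_eq_iff_index_eq)
      ultimately have "c ! j < c ! i" by simp
      then have "pos_in c (c ! i) < pos_in c (c ! j)"
        using pos_in_decreasing_on_constant_block[OF c s] bounds 2 u ij by simp
      then show False using pos_in_nth[OF d] ij len 2 by simp
    qed
  qed
qed

lemma standardize_unstandardize: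
  assumes c: "c \<in> perms m" and s: "s \<in> fund_seqs N m (iasc c)"
  shows "standardize (unstandardize c s) = c"
proof (rule standardize_eqI)
  have "length (unstandardize c s) = m" using c by (simp add: unstandardize_def perms_def)
  then show "c \<in> perms (length (unstandardize c s))" using c by simp
  show "c ! i < c ! j" if "i < length (unstandardize c s)" "j < length (unstandardize c s)"
    and "std_less (unstandardize c s) i j" for i j
    using std_less_unstandardize_imp_less[OF c s] that \<open>length (unstandardize c s) = m\<close> by simp
qed

lemma coinv_sum_fundQ_expansion:
  "coinv_sum N m q x = (\<Sum>c\<in>perms m. q ^ coinv c * fundQ N m (iasc c) x)"
proof -
  have "(\<Sum>c\<in>perms m. q ^ coinv c * fundQ N m (iasc c) x) =
      (\<Sum>(c, s)\<in>(SIGMA c:perms m. fund_seqs N m (iasc c)). q ^ coinv c * prod_list (map x s))"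
    by (simp add: fundQ_eq_sum_fund_seqs sum_distrib_left sum.Sigma finite_perms finite_fund_seqs)
  also have "\<dots> = coinv_sum N m q x"
    unfolding coinv_sum_def
  proof (rule sum.reindex_bij_witness[symmetric,
        where i = "\<lambda>(c, s). unstandardize c s" and j = "\<lambda>u. (standardize u, sort u)"])
    fix u assume u: "u \<in> words N m"
    then have len: "length u = m" by (simp add: words_def)
    show "(case (standardize u, sort u) of (c, s) \<Rightarrow> unstandardize c s) = u"
      by (simp add: unstandardize_standardize)
    show "(standardize u, sort u) \<in> (SIGMA c:perms m. fund_seqs N m (iasc c))"
      using standardize_in_perms[of u] sort_in_fund_seqs[OF u] len by simp
    have "prod_list (map x (sort u)) = prod_list (map x u)"
      by (metis mset_map mset_sort prod_mset_prod_list)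
    then show "(case (standardize u, sort u) of (c, s) \<Rightarrow> q ^ coinv c * prod_list (map x s)) =
        q ^ coinv u * prod_list (map x u)"
      by (simp add: coinv_standardize)
  next
    fix b assume "b \<in> (SIGMA c:perms m. fund_seqs N m (iasc c))"
    then obtain c s where b: "b = (c, s)" "c \<in> perms m" "s \<in> fund_seqs N m (iasc c)" by auto
    show "(\<lambda>u. (standardize u, sort u)) (case b of (c, s) \<Rightarrow> unstandardize c s) = b"
      using b standardize_unstandardize[OF b(2,3)] sort_unstandardize[OF b(2,3)] by simp
    show "(case b of (c, s) \<Rightarrow> unstandardize c s) \<in> words N m"
      using b unstandardize_in_words[OF b(2,3)] by simp
  qed
  finally show ?thesis ..
qed

section \<open>The zero-area Dyck path\<close>

lemma parking_functions_zero: "parking_functions (replicate m 0) = perms m"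
  unfolding parking_functions_def perms_def by auto

lemma dinv_zero: "length c = m \<Longrightarrow> dinv (replicate m 0) c = coinv c"
  unfolding dinv_def coinv_def by (intro arg_cong[where f = card]) auto

lemma read_pos_zero: "i < m \<Longrightarrow> read_pos (replicate m 0) i = m - Suc i"
proof -
  assume "i < m"
  then have "{j. j < length (replicate m (0::nat)) \<and>
      (replicate m (0::nat) ! j > replicate m 0 ! i \<or>
       (replicate m (0::nat) ! j = replicate m 0 ! i \<and> j > i))} = {Suc i..<m}"
    by (auto simp: nth_replicate)
  then show ?thesis unfolding read_pos_def by simp
qed

lemma sigma_word_zero: "length c = m \<Longrightarrow> sigma_word (replicate m 0) c = rev c"
proof -
  assume len: "length c = m"
  have the_row: "(THE i. i < length (replicate m (0::nat)) \<and> read_pos (replicate m 0) i = p) =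
      m - Suc p" if "p < m" for p
  proof (rule the_equality)
    show "m - Suc p < length (replicate m (0::nat)) \<and> read_pos (replicate m 0) (m - Suc p) = p"
      using that by (simp add: read_pos_zero)
  next
    fix i assume "i < length (replicate m (0::nat)) \<and> read_pos (replicate m 0) i = p"
    then show "i = m - Suc p" using read_pos_zero[of i m] by auto
  qed
  show ?thesis
    unfolding sigma_word_def by (rule nth_equalityI) (use len the_row in \<open>auto simp: rev_nth\<close>)
qed

lemma pos_in_rev:
  assumes "distinct c" "v \<in> set c"
  shows "pos_in (rev c) v = length c - Suc (pos_in c v)"
proof -
  have p: "pos_in c v < length c" "c ! pos_in c v = v" using nth_pos_in[OF assms] by auto
  then have "rev c ! (length c - Suc (pos_in c v)) = v" by (simp add: rev_nth)
  then show ?thesis using pos_in_nth[of "rev c" "length c - Suc (pos_in c v)"] assms(1) p(1)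
    by simp
qed

lemma pides_zero: "c \<in> perms m \<Longrightarrow> pides (replicate m 0) c = iasc c"
proof -
  assume c: "c \<in> perms m"
  have len: "length c = m" and d: "distinct c" and s: "set c = {1..m}"
    using c by (auto simp: perms_def)
  have "pos_in (rev c) (Suc v) < pos_in (rev c) v \<longleftrightarrow> pos_in c v < pos_in c (Suc v)"
    if "1 \<le> v" "v < m" for v
  proof -
    have "v \<in> set c" "Suc v \<in> set c" using s that by auto
    moreover have "pos_in c v < m" "pos_in c (Suc v) < m"
      using nth_pos_in[OF d] len calculation by auto
    ultimately show ?thesis using pos_in_rev[OF d] len by auto
  qed
  then show ?thesis
    unfolding pides_def sigma_word_zero[OF len] ides_def iasc_def using len by auto
qed

lemma LLT_eq_coinv_sum: "LLT N m q x = coinv_sum N m q x"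
proof (cases "m = 0")
  case True then show ?thesis by (simp add: LLT_def coinv_sum_0)
next
  case False
  have "LLT N m q x = (\<Sum>c\<in>perms m. q ^ coinv c * fundQ N m (iasc c) x)"
    unfolding LLT_def LLT_D_def parking_functions_zero if_not_P[OF False]
    by (intro sum.cong refl) (auto simp: dinv_zero pides_zero perms_def)
  then show ?thesis by (simp add: coinv_sum_fundQ_expansion)
qed

section \<open>Truncated q-exponentials\<close>

lemma qpoch_0 [simp]: "qpoch q 0 = 1"
  by (simp add: qpoch_def)

lemma qpoch_Suc: "qpoch q (Suc j) = qpoch q j * (1 - q ^ Suc j)"
  unfolding qpoch_def by (simp add: prod.nat_ivl_Suc' mult.commute)

lemma qpoch_nonzero:
  assumes "\<forall>i\<in>{1..n}. q ^ i \<noteq> 1" "j \<le> n"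
  shows "qpoch q j \<noteq> 0"
  using assms unfolding qpoch_def by (auto simp: prod_zero_iff)

lemma qpoch_mult_qbinom:
  assumes "j \<le> m" "qpoch q j \<noteq> 0" "qpoch q (m - j) \<noteq> 0"
  shows "qpoch q j * qbinom q m j * qpoch q (m - j) = qpoch q m"
  using assms by (simp add: qbinom_def)

definition qexp :: "nat \<Rightarrow> 'a::field \<Rightarrow> 'a \<Rightarrow> 'a fps" where
  "qexp n q y = Abs_fps (\<lambda>j. if j \<le> n then y ^ j / qpoch q j else 0)"

definition qexp_prod :: "nat \<Rightarrow> 'a::field \<Rightarrow> nat \<Rightarrow> (nat \<Rightarrow> 'a) \<Rightarrow> 'a fps" where
  "qexp_prod n q N x = (\<Prod>i<N. qexp n q (x i))"

definition fps_eq_upto :: "nat \<Rightarrow> 'a::comm_ring_1 fps \<Rightarrow> 'a fps \<Rightarrow> bool" where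
  "fps_eq_upto n f g = (\<forall>j\<le>n. fps_nth f j = fps_nth g j)"

lemma fps_eq_upto_refl: "fps_eq_upto n f f"
  by (simp add: fps_eq_upto_def)

lemma fps_eq_upto_sym: "fps_eq_upto n f g \<Longrightarrow> fps_eq_upto n g f"
  by (simp add: fps_eq_upto_def)

lemma fps_eq_upto_diff:
  "fps_eq_upto n f g \<Longrightarrow> fps_eq_upto n f' g' \<Longrightarrow> fps_eq_upto n (f - f') (g - g')"
  by (simp add: fps_eq_upto_def)

lemma fps_eq_upto_mult:
  "fps_eq_upto n f g \<Longrightarrow> fps_eq_upto n f' g' \<Longrightarrow> fps_eq_upto n (f * f') (g * g')"
  unfolding fps_eq_upto_def fps_mult_nth by auto

lemma fps_eq_upto_sum:
  "(\<And>a. a \<in> A \<Longrightarrow> fps_eq_upto n (f a) (g a)) \<Longrightarrow> fps_eq_upto n (sum f A) (sum g A)"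
  unfolding fps_eq_upto_def fps_sum_nth by auto

lemma qexp_mult_one_minus:
  assumes "\<forall>i\<in>{1..n}. q ^ i \<noteq> 1"
  shows "fps_eq_upto n ((1 - fps_const y * fps_X) * qexp n q y) (qexp n q (q * y))"
  unfolding fps_eq_upto_def
proof (intro allI impI)
  fix j assume j: "j \<le> n"
  show "fps_nth ((1 - fps_const y * fps_X) * qexp n q y) j = fps_nth (qexp n q (q * y)) j"
  proof (cases j)
    case 0 then show ?thesis by (simp add: qexp_def)
  next
    case (Suc i)
    have "qpoch q (Suc i) \<noteq> 0" "qpoch q i \<noteq> 0" using qpoch_nonzero[OF assms] j Suc by auto
    then have "y ^ j / qpoch q j - y * (y ^ i / qpoch q i) = (q * y) ^ j / qpoch q j"
      using Suc by (simp add: qpoch_Suc field_simps power_mult_distrib)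
    then show ?thesis using Suc j by (simp add: qexp_def algebra_simps)
  qed
qed

lemma qexp_diff:
  assumes "\<forall>i\<in>{1..n}. q ^ i \<noteq> 1"
  shows "fps_eq_upto n (qexp n q y - qexp n q (q * y)) (fps_const y * fps_X * qexp n q y)"
proof -
  have "fps_eq_upto n (qexp n q y - qexp n q (q * y))
      (qexp n q y - (1 - fps_const y * fps_X) * qexp n q y)"
    by (rule fps_eq_upto_diff[OF fps_eq_upto_refl fps_eq_upto_sym[OF qexp_mult_one_minus[OF assms]]])
  then show ?thesis by (simp add: algebra_simps)
qed

lemma qexp_scale: "qexp n q (c * y) = qexp n q y oo (fps_const c * fps_X)"
  by (simp add: qexp_def fps_eq_iff power_mult_distrib)

lemma fps_nth_qexp_prod_scale:
  "fps_nth (qexp_prod n q N (\<lambda>i. c * x i)) j = c ^ j * fps_nth (qexp_prod n q N x) j"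
proof -
  have "qexp_prod n q N (\<lambda>i. c * x i) = qexp_prod n q N x oo (fps_const c * fps_X)"
    unfolding qexp_prod_def by (simp add: fps_compose_prod_distrib qexp_scale)
  then show ?thesis by simp
qed

lemma fps_nth_qexp_prod_0: "fps_nth (qexp_prod n q N x) 0 = 1"
  by (induction N) (simp_all add: qexp_prod_def qexp_def)

lemma qexp_prod_cong: "(\<And>i. i < N \<Longrightarrow> x i = y i) \<Longrightarrow> qexp_prod n q N x = qexp_prod n q N y"
  unfolding qexp_prod_def by (intro prod.cong) auto

lemma qexp_prod_scale_from_Suc:
  assumes "\<forall>i\<in>{1..n}. q ^ i \<noteq> 1" "a < N"
  shows "fps_eq_upto n
      (qexp_prod n q N (scale_from q (Suc a) x) - qexp_prod n q N (scale_from q a x))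
      (fps_const (x a) * fps_X * qexp_prod n q N (scale_from q (Suc a) x))"
proof -
  define R where "R = (\<Prod>i\<in>{..<N} - {a}. qexp n q (scale_from q (Suc a) x i))"
  have R: "R = (\<Prod>i\<in>{..<N} - {a}. qexp n q (scale_from q a x i))"
    unfolding R_def by (intro prod.cong) (auto simp: scale_from_def)
  have "qexp_prod n q N (scale_from q (Suc a) x) = qexp n q (x a) * R"
    unfolding qexp_prod_def R_def using assms(2)
    by (subst prod.remove[of _ a]) (auto simp: scale_from_def)
  moreover have "qexp_prod n q N (scale_from q a x) = qexp n q (q * x a) * R"
    unfolding qexp_prod_def R using assms(2)
    by (subst prod.remove[of _ a]) (auto simp: scale_from_def)
  moreover have "fps_eq_upto n ((qexp n q (x a) - qexp n q (q * x a)) * R)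
      ((fps_const (x a) * fps_X * qexp n q (x a)) * R)"
    by (rule fps_eq_upto_mult[OF qexp_diff[OF assms(1)] fps_eq_upto_refl])
  ultimately show ?thesis by (simp add: algebra_simps)
qed

text \<open>The sum telescopes from scale_from q N x, which agrees with x on the variables, to
scale_from q 0 x = q x.\<close>

lemma qexp_prod_telescope:
  assumes "\<forall>i\<in>{1..n}. q ^ i \<noteq> 1"
  shows "fps_eq_upto n (qexp_prod n q N x - qexp_prod n q N (\<lambda>i. q * x i))
     (\<Sum>a<N. fps_const (x a) * fps_X * qexp_prod n q N (scale_from q (Suc a) x))"
proof -
  have "(\<Sum>a<N. qexp_prod n q N (scale_from q (Suc a) x) - qexp_prod n q N (scale_from q a x)) =
      qexp_prod n q N (scale_from q N x) - qexp_prod n q N (scale_from q 0 x)"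
    by (rule sum_lessThan_telescope)
  moreover have "qexp_prod n q N (scale_from q N x) = qexp_prod n q N x"
    by (rule qexp_prod_cong) (simp add: scale_from_def)
  moreover have "scale_from q 0 x = (\<lambda>i. q * x i)"
    by (simp add: scale_from_def fun_eq_iff)
  moreover have "fps_eq_upto n
      (\<Sum>a<N. qexp_prod n q N (scale_from q (Suc a) x) - qexp_prod n q N (scale_from q a x))
      (\<Sum>a<N. fps_const (x a) * fps_X * qexp_prod n q N (scale_from q (Suc a) x))"
    by (intro fps_eq_upto_sum qexp_prod_scale_from_Suc assms) simp
  ultimately show ?thesis by simp
qed

lemma coinv_sum_eq_coeff:
  assumes "\<forall>i\<in>{1..n}. q ^ i \<noteq> 1" "m \<le> n"
  shows "coinv_sum N m q x = qpoch q m * fps_nth (qexp_prod n q N x) m"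
  using assms(2)
proof (induction m arbitrary: x)
  case 0 then show ?case by (simp add: coinv_sum_0 fps_nth_qexp_prod_0)
next
  case (Suc m)
  have "coinv_sum N (Suc m) q x =
      (\<Sum>a<N. x a * (qpoch q m * fps_nth (qexp_prod n q N (scale_from q (Suc a) x)) m))"
    unfolding coinv_sum_Suc using Suc by simp
  also have "\<dots> = qpoch q m * fps_nth
      (\<Sum>a<N. fps_const (x a) * fps_X * qexp_prod n q N (scale_from q (Suc a) x)) (Suc m)"
    by (simp add: fps_sum_nth sum_distrib_left mult.assoc mult.left_commute)
  also have "\<dots> = qpoch q m * fps_nth (qexp_prod n q N x - qexp_prod n q N (\<lambda>i. q * x i)) (Suc m)"
    using qexp_prod_telescope[OF assms(1), of N x] Suc.prems unfolding fps_eq_upto_def by simp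
  also have "\<dots> = qpoch q (Suc m) * fps_nth (qexp_prod n q N x) (Suc m)"
    by (simp add: fps_nth_qexp_prod_scale qpoch_Suc algebra_simps)
  finally show ?case .
qed

definition elem_fps :: "nat \<Rightarrow> (nat \<Rightarrow> 'a::field) \<Rightarrow> 'a fps" where
  "elem_fps N x = (\<Prod>i<N. 1 - fps_const (x i) * fps_X)"

lemma fps_nth_elem_fps: "fps_nth (elem_fps N x) k = (-1) ^ k * elem N k x"
proof -
  have monomial: "(\<Prod>i\<in>A. - fps_const (x i) * fps_X) =
      fps_const ((-1) ^ card A * (\<Prod>i\<in>A. x i)) * fps_X ^ card A" if "finite A" for A
    using that by (induction A rule: finite_induct) (simp_all add: algebra_simps)
  have "elem_fps N x = (\<Prod>i<N. - fps_const (x i) * fps_X + 1)"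
    unfolding elem_fps_def by (simp add: algebra_simps del: fps_const_neg)
  also have "\<dots> = (\<Sum>A\<in>Pow {..<N}. \<Prod>i\<in>A. - fps_const (x i) * fps_X)"
    by (subst prod_add) simp_all
  also have "\<dots> = (\<Sum>A\<in>Pow {..<N}. fps_const ((-1) ^ card A * (\<Prod>i\<in>A. x i)) * fps_X ^ card A)"
    by (intro sum.cong refl monomial) (auto dest: finite_subset)
  also have "fps_nth \<dots> k =
      (\<Sum>A\<in>Pow {..<N}. if card A = k then (-1) ^ k * (\<Prod>i\<in>A. x i) else 0)"
    by (auto simp: fps_sum_nth intro!: sum.cong)
  also have "\<dots> = (\<Sum>A\<in>{A. A \<subseteq> {..<N} \<and> card A = k}. (-1) ^ k * (\<Prod>i\<in>A. x i))"
    by (simp add: sum.inter_filter[symmetric] Pow_def)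
  finally show ?thesis by (simp add: elem_def sum_distrib_left)
qed

lemma elem_0: "elem N 0 x = 1"
proof -
  have "{A. A \<subseteq> {..<N} \<and> card A = 0} = {{}}"
    using finite_subset[of _ "{..<N}"] by fastforce
  then show ?thesis by (simp add: elem_def)
qed

lemma elem_fps_mult_qexp_prod:
  assumes "\<forall>i\<in>{1..n}. q ^ i \<noteq> 1"
  shows "fps_eq_upto n (elem_fps N x * qexp_prod n q N x) (qexp_prod n q N (\<lambda>i. q * x i))"
proof (induction N)
  case 0 then show ?case by (simp add: elem_fps_def qexp_prod_def fps_eq_upto_refl)
next
  case (Suc N)
  have "elem_fps (Suc N) x * qexp_prod n q (Suc N) x =
      (elem_fps N x * qexp_prod n q N x) * ((1 - fps_const (x N) * fps_X) * qexp n q (x N))"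
    by (simp add: elem_fps_def qexp_prod_def mult_ac)
  moreover have "qexp_prod n q (Suc N) (\<lambda>i. q * x i) =
      qexp_prod n q N (\<lambda>i. q * x i) * qexp n q (q * x N)"
    by (simp add: qexp_prod_def)
  ultimately show ?case
    using fps_eq_upto_mult[OF Suc qexp_mult_one_minus[OF assms]] by simp
qed

lemma qexp_prod_coeff_recursion:
  assumes "\<forall>i\<in>{1..n}. q ^ i \<noteq> 1"
  shows "(1 - q ^ n) * fps_nth (qexp_prod n q N x) n =
    (\<Sum>k=1..n. (-1) ^ (k - 1) * elem N k x * fps_nth (qexp_prod n q N x) (n - k))"
proof -
  define t where "t j = fps_nth (qexp_prod n q N x) j" for j
  have "(\<Sum>k=0..n. (-1) ^ k * elem N k x * t (n - k)) = q ^ n * t n"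
    using elem_fps_mult_qexp_prod[OF assms, of N x]
    unfolding fps_eq_upto_def fps_mult_nth fps_nth_elem_fps fps_nth_qexp_prod_scale t_def
    by simp
  moreover have "(\<Sum>k=0..n. (-1) ^ k * elem N k x * t (n - k)) =
      t n + (\<Sum>k=1..n. (-1) ^ k * elem N k x * t (n - k))"
    by (simp add: sum.atLeast_Suc_atMost elem_0)
  moreover have "(\<Sum>k=1..n. (-1) ^ k * elem N k x * t (n - k)) =
      - (\<Sum>k=1..n. (-1) ^ (k - 1) * elem N k x * t (n - k))"
    by (subst sum_negf[symmetric], intro sum.cong refl) (auto simp: power_eq_if)
  ultimately show ?thesis unfolding t_def by (simp add: algebra_simps)
qed

theorem theorem3p1:
  fixes x :: "nat \<Rightarrow> 'a::field" and q :: 'a and n N :: nat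
  assumes "n \<ge> 2"
    and "\<forall>i\<in>{1..n}. q ^ i \<noteq> 1"
  shows "LLT N n q x =
    (\<Sum>k=1..n. (-1) ^ (k - 1) * qpoch q (k - 1) * qbinom q (n - 1) (k - 1)
                 * elem N k x * LLT N (n - k) q x)"
proof -
  define t where "t j = fps_nth (qexp_prod n q N x) j" for j
  have LLT_t: "LLT N m q x = qpoch q m * t m" if "m \<le> n" for m
    unfolding LLT_eq_coinv_sum t_def using coinv_sum_eq_coeff[OF assms(2) that] .
  have "qpoch q n = qpoch q (n - 1) * (1 - q ^ n)"
    using qpoch_Suc[of q "n - 1"] assms(1) by simp
  then have "LLT N n q x = qpoch q (n - 1) * ((1 - q ^ n) * t n)"
    using LLT_t[of n] by simp
  also have "\<dots> = (\<Sum>k=1..n. (-1) ^ (k - 1) * elem N k x * (qpoch q (n - 1) * t (n - k)))"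
    unfolding t_def qexp_prod_coeff_recursion[OF assms(2)] sum_distrib_left by (simp add: mult_ac)
  also have "\<dots> = (\<Sum>k=1..n. (-1) ^ (k - 1) * qpoch q (k - 1) * qbinom q (n - 1) (k - 1)
                 * elem N k x * LLT N (n - k) q x)"
  proof (intro sum.cong refl)
    fix k assume k: "k \<in> {1..n}"
    then have "k - 1 \<le> n - 1" "n - 1 - (k - 1) = n - k" by auto
    then have "qpoch q (n - 1) = qpoch q (k - 1) * qbinom q (n - 1) (k - 1) * qpoch q (n - k)"
      using qpoch_mult_qbinom[of "k - 1" "n - 1" q] qpoch_nonzero[OF assms(2)] by simp
    then show "(-1) ^ (k - 1) * elem N k x * (qpoch q (n - 1) * t (n - k)) =
        (-1) ^ (k - 1) * qpoch q (k - 1) * qbinom q (n - 1) (k - 1) * elem N k x * LLT N (n - k) q x"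
      using LLT_t[of "n - k"] by (simp add: mult_ac)
  qed
  finally show ?thesis .
qed

end
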